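(* Let $0\le d<d'$ be integers and $\alpha_1,\dots,\alpha_{d'+1}>0$. If reconstruction is possible for the poset $\mathbb Z_{\ge0}^{d+1}$ with parameters $(\alpha_1,\dots,\alpha_{d+1})$, then reconstruction is possible for the poset $\mathbb Z_{\ge0}^{d'+1}$ with parameters $(\alpha_1,\dots,\alpha_{d'+1})$.
   Context: Gaussian broadcast model on $\mathbb{Z}_{\ge0}^{k+1}$ (for $k=d$ or $d'$) with parameters $(\alpha_1,\dots,\alpha_{k+1})$: order $u\le v$ iff $v-u\in\mathbb{Z}_{\ge0}^{k+1}$; $L_t$ = tuples with coordinate sum $t$; $\mathfrak p(v)$ = set of elements covered by $v$, so $|\mathfrak p(v)|$ is the number of positive coordinates. Let $X_0\sim\mathcal N(0,1)$, independently i.i.d. $W_{u\to v}\sim\mathcal N(0,1)$ for covering pairs $u\lessdot v$, $X_{\mathbf 0}=X_0$, and $X_v=\alpha_{|\mathfrak p(v)|}\sum_{u\in\mathfrak p(v)}(X_u+W_{u\to v})$ for $v\ne\mathbf 0$. Reconstruction is possible if there is $c:P\to\mathbb R$ with finitely many nonzero values on each layer such that $\zeta_t:=\sum_{u\in L_t}c_uX_u$ satisfies $\operatorname{Var}(\zeta_t)>0$ for all $t$ and $\operatorname{Cov}(\zeta_t,X_0)/\sqrt{\operatorname{Var}(\zeta_t)\operatorname{Var}(X_0)}\not\to0$ as $t\to\infty$. *)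

theory Defs
  imports "HOL-Probability.Probability"
begin

text \<open>Elements of the poset Z_{>=0}^{k+1} are represented as functions nat => nat
  vanishing outside the coordinates 0..k.\<close>

definition pts :: "nat \<Rightarrow> (nat \<Rightarrow> nat) set" where
  "pts k = {v. \<forall>i>k. v i = 0}"

definition layer :: "nat \<Rightarrow> nat \<Rightarrow> (nat \<Rightarrow> nat) set" where
  "layer k t = {v \<in> pts k. (\<Sum>i\<le>k. v i) = t}"

definition covers :: "nat \<Rightarrow> ((nat \<Rightarrow> nat) \<times> (nat \<Rightarrow> nat)) set" where
  "covers k = {(u, v). u \<in> pts k \<and> (\<exists>i\<le>k. v = u(i := Suc (u i)))}"

text \<open>Positive coordinates of v; the elements covered by v are v(i := v i - 1)
  for such i, so the number of elements covered by v is the card of this set.\<close>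
definition poscoords :: "nat \<Rightarrow> (nat \<Rightarrow> nat) \<Rightarrow> nat set" where
  "poscoords k v = {i. i \<le> k \<and> 0 < v i}"

primrec Xlay :: "nat \<Rightarrow> (nat \<Rightarrow> real) \<Rightarrow> ('a \<Rightarrow> real)
    \<Rightarrow> ((nat \<Rightarrow> nat) \<times> (nat \<Rightarrow> nat) \<Rightarrow> 'a \<Rightarrow> real)
    \<Rightarrow> nat \<Rightarrow> (nat \<Rightarrow> nat) \<Rightarrow> 'a \<Rightarrow> real" where
  "Xlay k \<alpha> X0 W 0 = (\<lambda>v \<omega>. X0 \<omega>)"
| "Xlay k \<alpha> X0 W (Suc t) = (\<lambda>v \<omega>. \<alpha> (card (poscoords k v)) *
      (\<Sum>i\<in>poscoords k v. Xlay k \<alpha> X0 W t (v(i := v i - 1)) \<omega>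
                            + W (v(i := v i - 1), v) \<omega>))"

definition Xproc :: "nat \<Rightarrow> (nat \<Rightarrow> real) \<Rightarrow> ('a \<Rightarrow> real)
    \<Rightarrow> ((nat \<Rightarrow> nat) \<times> (nat \<Rightarrow> nat) \<Rightarrow> 'a \<Rightarrow> real)
    \<Rightarrow> (nat \<Rightarrow> nat) \<Rightarrow> 'a \<Rightarrow> real" where
  "Xproc k \<alpha> X0 W v = Xlay k \<alpha> X0 W (\<Sum>i\<le>k. v i) v"

definition gauss_noise :: "nat \<Rightarrow> 'a measure \<Rightarrow> ('a \<Rightarrow> real)
    \<Rightarrow> ((nat \<Rightarrow> nat) \<times> (nat \<Rightarrow> nat) \<Rightarrow> 'a \<Rightarrow> real) \<Rightarrow> bool" where
  "gauss_noise k M X0 W \<longleftrightarrow> prob_space M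
     \<and> distributed M lborel X0 std_normal_density
     \<and> (\<forall>e\<in>covers k. distributed M lborel (W e) std_normal_density)
     \<and> prob_space.indep_vars M (\<lambda>_. borel)
          (\<lambda>j. case j of None \<Rightarrow> X0 | Some e \<Rightarrow> W e) (insert None (Some ` covers k))"

definition covar :: "'a measure \<Rightarrow> ('a \<Rightarrow> real) \<Rightarrow> ('a \<Rightarrow> real) \<Rightarrow> real" where
  "covar M X Y = prob_space.expectation M
      (\<lambda>\<omega>. (X \<omega> - prob_space.expectation M X) * (Y \<omega> - prob_space.expectation M Y))"

text \<open>Reconstruction for a given realisation of the model. Layers are finite,
  so every c has finitely many nonzero values on each layer and zeta_t is
  the sum over the whole layer.\<close>
definition reconstruction :: "nat \<Rightarrow> (nat \<Rightarrow> real) \<Rightarrow> 'a measure \<Rightarrow> ('a \<Rightarrow> real)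
    \<Rightarrow> ((nat \<Rightarrow> nat) \<times> (nat \<Rightarrow> nat) \<Rightarrow> 'a \<Rightarrow> real) \<Rightarrow> bool" where
  "reconstruction k \<alpha> M X0 W \<longleftrightarrow>
     (\<exists>c :: (nat \<Rightarrow> nat) \<Rightarrow> real.
        let \<zeta> = (\<lambda>t \<omega>. \<Sum>u\<in>layer k t. c u * Xproc k \<alpha> X0 W u \<omega>) in
        (\<forall>t. finite {u \<in> layer k t. c u \<noteq> 0})
        \<and> (\<forall>t. prob_space.variance M (\<zeta> t) > 0)
        \<and> \<not> ((\<lambda>t. covar M (\<zeta> t) X0
               / sqrt (prob_space.variance M (\<zeta> t) * prob_space.variance M X0))
              \<longlonglongrightarrow> 0))"

end

theory Submission
  imports Defs
begin

text \<open>The poset of dimension d+1 is the face of the one of dimension d'+1 on which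
  the last d' - d coordinates vanish. No element of the face covers an element
  outside it, so the larger process restricted to the face is the smaller process
  driven by the same noise. Extending a reconstruction estimator of the smaller
  model by zero therefore yields the very same statistics zeta_t in the larger one.\<close>

lemma pts_mono: "d \<le> d' \<Longrightarrow> pts d \<subseteq> pts d'"
  by (auto simp: pts_def)

lemma covers_mono: "d \<le> d' \<Longrightarrow> covers d \<subseteq> covers d'"
  unfolding covers_def pts_def by clarsimp (metis le_trans)

lemma gauss_noise_mono:
  assumes "d \<le> d'" "gauss_noise d' M X0 W"
  shows "gauss_noise d M X0 W"
proof -
  have "prob_space M" using assms(2) by (simp add: gauss_noise_def)
  moreover have "insert None (Some ` covers d) \<subseteq> insert None (Some ` covers d')"
    using covers_mono[OF assms(1)] by auto
  ultimately show ?thesis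
    using assms(2) covers_mono[OF assms(1)] prob_space.indep_vars_subset
    unfolding gauss_noise_def by (meson subsetD)
qed

lemma sum_coords_pts: "d \<le> d' \<Longrightarrow> v \<in> pts d \<Longrightarrow> (\<Sum>i\<le>d'. v i) = (\<Sum>i\<le>d. v i)"
  by (rule sum.mono_neutral_right) (auto simp: pts_def)

lemma poscoords_pts: "d \<le> d' \<Longrightarrow> v \<in> pts d \<Longrightarrow> poscoords d' v = poscoords d v"
  unfolding poscoords_def pts_def by (auto, metis not_le less_irrefl)

lemma layer_mono: "d \<le> d' \<Longrightarrow> layer d t \<subseteq> layer d' t"
  using pts_mono sum_coords_pts unfolding layer_def by auto

lemma finite_layer: "finite (layer k t)"
proof (rule finite_subset)
  show "layer k t \<subseteq> {v. \<forall>i. (i \<in> {..k} \<longrightarrow> v i \<in> {..t}) \<and> (i \<notin> {..k} \<longrightarrow> v i = 0)}"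
  proof clarify
    fix v i assume v: "v \<in> layer k t"
    show "(i \<in> {..k} \<longrightarrow> v i \<in> {..t}) \<and> (i \<notin> {..k} \<longrightarrow> v i = 0)"
    proof (intro conjI impI)
      assume "i \<in> {..k}"
      then have "v i \<le> (\<Sum>j\<le>k. v j)" by (intro member_le_sum) auto
      then show "v i \<in> {..t}" using v by (simp add: layer_def)
    qed (use v in \<open>simp add: layer_def pts_def\<close>)
  qed
qed (rule finite_set_of_finite_funs; simp)

lemma Xlay_pts:
  assumes "d \<le> d'" "v \<in> pts d"
  shows "Xlay d' \<alpha> X0 W t v = Xlay d \<alpha> X0 W t v"
  using assms(2)
proof (induction t arbitrary: v)
  case (Suc t)
  have "v(i := v i - 1) \<in> pts d" for i
    using Suc.prems by (auto simp: pts_def)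
  then have "Xlay d' \<alpha> X0 W t (v(i := v i - 1)) = Xlay d \<alpha> X0 W t (v(i := v i - 1))" for i
    by (rule Suc.IH)
  then show ?case
    using poscoords_pts[OF assms(1) Suc.prems] by simp
qed simp

lemma Xproc_pts: "d \<le> d' \<Longrightarrow> v \<in> pts d \<Longrightarrow> Xproc d' \<alpha> X0 W v = Xproc d \<alpha> X0 W v"
  unfolding Xproc_def by (simp add: sum_coords_pts Xlay_pts)

lemma layer_statistic_extend:
  assumes "d \<le> d'"
  shows "(\<Sum>u\<in>layer d' t. (if u \<in> pts d then c u else 0) * Xproc d' \<alpha> X0 W u \<omega>)
       = (\<Sum>u\<in>layer d t. c u * Xproc d \<alpha> X0 W u \<omega>)"
proof -
  have "(\<Sum>u\<in>layer d' t. (if u \<in> pts d then c u else 0) * Xproc d' \<alpha> X0 W u \<omega>)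
      = (\<Sum>u\<in>layer d t. (if u \<in> pts d then c u else 0) * Xproc d' \<alpha> X0 W u \<omega>)"
    by (rule sum.mono_neutral_right[OF finite_layer layer_mono[OF assms]])
      (auto simp: layer_def sum_coords_pts[OF assms])
  also have "\<dots> = (\<Sum>u\<in>layer d t. c u * Xproc d \<alpha> X0 W u \<omega>)"
    by (rule sum.cong) (auto simp: layer_def Xproc_pts[OF assms])
  finally show ?thesis .
qed

lemma reconstruction_mono:
  assumes "d \<le> d'" "reconstruction d \<alpha> M X0 W"
  shows "reconstruction d' \<alpha> M X0 W"
proof -
  from assms(2) obtain c where
    "let \<zeta> = (\<lambda>t \<omega>. \<Sum>u\<in>layer d t. c u * Xproc d \<alpha> X0 W u \<omega>) in
      (\<forall>t. prob_space.variance M (\<zeta> t) > 0)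
      \<and> \<not> ((\<lambda>t. covar M (\<zeta> t) X0
               / sqrt (prob_space.variance M (\<zeta> t) * prob_space.variance M X0)) \<longlonglongrightarrow> 0)"
    unfolding reconstruction_def Let_def by blast
  moreover have "(\<lambda>t \<omega>. \<Sum>u\<in>layer d' t. (if u \<in> pts d then c u else 0) * Xproc d' \<alpha> X0 W u \<omega>)
      = (\<lambda>t \<omega>. \<Sum>u\<in>layer d t. c u * Xproc d \<alpha> X0 W u \<omega>)"
    using layer_statistic_extend[OF assms(1)] by (intro ext)
  ultimately show ?thesis
    unfolding reconstruction_def
    by (intro exI[of _ "\<lambda>u. if u \<in> pts d then c u else 0"]) (simp add: finite_layer)
qed

theorem lemmal:
  fixes d d' :: nat and \<alpha> :: "nat \<Rightarrow> real"
  assumes "d < d'"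
    and "\<forall>i\<in>{1..d'+1}. \<alpha> i > 0"
    and "\<forall>(M :: 'a measure) X0 W. gauss_noise d M X0 W \<longrightarrow> reconstruction d \<alpha> M X0 W"
  shows "\<forall>(M :: 'a measure) X0 W. gauss_noise d' M X0 W \<longrightarrow> reconstruction d' \<alpha> M X0 W"
  using assms(1,3) gauss_noise_mono reconstruction_mono by (meson less_imp_le)

end
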